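(* Let \(P\colon\mathbb{R}^n\to\mathbb{R}^n\) be a vector field, let \(\nu,\eta\colon\mathbb{R}_+\to\mathbb{R}\) be continuous functions and \(\varepsilon\in\mathbb{R}\) a constant, and consider the second order differential equation \[\ddot x+\nu(t)\dot x+\eta(t)P(x)=\varepsilon\,\frac{d}{dt}\big[\eta(t)P(x)\big].\] If \(P\) is conservative, \(P=\nabla f\) for some function \(f\colon\mathbb{R}^n\to\mathbb{R}\), then this equation is derived from the Lagrange–d'Alembert variational principle: it is the equation of motion (forced Euler–Lagrange equation \(\frac{d}{dt}\big(\frac{\partial L}{\partial \dot x^i}\big)-\frac{\partial L}{\partial x^i}=F_i\)) of the forced time-dependent Lagrangian system with \[L(x,\dot x,t)=a(t)\tfrac12\|\dot x\|^2-b(t)f(x),\qquad F(x,\dot x,t)=\varepsilon\,a(t)\frac{d}{dt}\Big[\frac{b(t)}{a(t)}P(x)\Big],\] where \(a(t)=\exp\big(\int_0^t\nu(s)\,ds\big)\) and \(b(t)=a(t)\eta(t)\) for \(t\ge0\).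
   Context: The Lagrange–d'Alembert principle for a time-dependent Lagrangian \(L\colon TQ\times\mathbb{R}\to\mathbb{R}\) and external force \(F\) seeks curves \(\sigma\) with fixed endpoints such that \(\delta\int_a^b L(\sigma'(t),t)\,dt+\int_a^b F(\sigma'(t),t)\,\delta\sigma(t)\,dt=0\) for all variations \(\delta\sigma\) vanishing at the endpoints; its solutions satisfy the forced Euler–Lagrange equations \(\frac{d}{dt}\big(\frac{\partial L}{\partial \dot x^i}\big)-\frac{\partial L}{\partial x^i}=F_i\). *)

theory Defs
  imports "HOL-Analysis.Analysis"
begin

text \<open>Configuration space R^n is modelled as real^'n. A time-dependent Lagrangian
  is a function L y v t of position y, velocity v and time t.\<close>

definition dL_dv :: "(real^'n \<Rightarrow> real^'n \<Rightarrow> real \<Rightarrow> real) \<Rightarrow> real^'n \<Rightarrow> real^'n \<Rightarrow> real \<Rightarrow> 'n \<Rightarrow> real" where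
  "dL_dv L y v t i = deriv (\<lambda>h. L y (v + h *\<^sub>R axis i 1) t) 0"

definition dL_dx :: "(real^'n \<Rightarrow> real^'n \<Rightarrow> real \<Rightarrow> real) \<Rightarrow> real^'n \<Rightarrow> real^'n \<Rightarrow> real \<Rightarrow> 'n \<Rightarrow> real" where
  "dL_dx L y v t i = deriv (\<lambda>h. L (y + h *\<^sub>R axis i 1) v t) 0"

text \<open>Forced Euler--Lagrange equation at time t along the curve sigma, where Fs t is
  the external force evaluated along the curve at time t:
  d/dt (dL/dv^i) - dL/dx^i = F_i for every coordinate i.\<close>
definition forced_EL :: "(real^'n \<Rightarrow> real^'n \<Rightarrow> real \<Rightarrow> real) \<Rightarrow> (real \<Rightarrow> real^'n) \<Rightarrow> (real \<Rightarrow> real^'n) \<Rightarrow> real \<Rightarrow> bool" where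
  "forced_EL L Fs \<sigma> t \<longleftrightarrow>
     (\<forall>i. ((\<lambda>s. dL_dv L (\<sigma> s) (vector_derivative \<sigma> (at s)) s i) has_real_derivative
            (dL_dx L (\<sigma> t) (vector_derivative \<sigma> (at t)) t i + Fs t $ i)) (at t))"

end

theory Submission
  imports Defs
begin

text \<open>For the Lagrangian \<open>L = a |v|\<^sup>2/2 - b f\<close> one has \<open>\<partial>L/\<partial>v = a v\<close> and
  \<open>\<partial>L/\<partial>x = -b \<nabla>f\<close>, so the forced Euler--Lagrange equation reads
  \<open>a' x' + a x'' + b P(x) = F\<close>. With \<open>a = exp (\<integral>\<^sub>0\<^sup>t \<nu>)\<close> we have \<open>a' = a \<nu>\<close>,
  \<open>b = a \<eta>\<close> and \<open>b/a = \<eta>\<close>, so every term carries the factor \<open>a > 0\<close>;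
  dividing by it gives the damped equation.\<close>

definition weighted_lagrangian ::
    "(real \<Rightarrow> real) \<Rightarrow> (real \<Rightarrow> real) \<Rightarrow> (real^'n \<Rightarrow> real) \<Rightarrow> real^'n \<Rightarrow> real^'n \<Rightarrow> real \<Rightarrow> real"
  where "weighted_lagrangian a b f = (\<lambda>y v s. a s * ((1/2) * (norm v)\<^sup>2) - b s * f y)"

lemma norm_add_scaleR_axis_power2:
  fixes v :: "real^'n"
  shows "(norm (v + h *\<^sub>R axis i 1))\<^sup>2 = (norm v)\<^sup>2 + 2 * h * v $ i + h\<^sup>2"
  unfolding power2_norm_eq_inner
  by (simp add: inner_add_left inner_add_right inner_axis inner_axis' inner_commute
      algebra_simps power2_eq_square)

lemma has_real_derivative_vec_nth:
  fixes x :: "real \<Rightarrow> real^'n"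
  assumes "(x has_vector_derivative v) F"
  shows "((\<lambda>s. x s $ i) has_real_derivative v $ i) F"
  using bounded_linear.has_derivative[OF bounded_linear_vec_nth assms[unfolded has_vector_derivative_def]]
  unfolding has_real_derivative_iff_has_vector_derivative has_vector_derivative_def
  by simp

lemma gderiv_imp_has_real_derivative_axis:
  fixes f :: "real^'n \<Rightarrow> real"
  assumes "GDERIV f y :> g"
  shows "((\<lambda>h. f (y + h *\<^sub>R axis i 1)) has_real_derivative g $ i) (at 0)"
proof -
  have "((\<lambda>h. y + h *\<^sub>R axis i 1) has_derivative (\<lambda>h. h *\<^sub>R axis i 1)) (at 0)"
    by (auto intro!: derivative_eq_intros)
  moreover have "(f has_derivative (\<lambda>h. h \<bullet> g)) (at (y + 0 *\<^sub>R axis i 1))"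
    using assms by (simp add: gderiv_def)
  ultimately have "((\<lambda>h. f (y + h *\<^sub>R axis i 1)) has_derivative (\<lambda>h. (h *\<^sub>R axis i 1) \<bullet> g)) (at 0)"
    using has_derivative_compose by fastforce
  moreover have "(\<lambda>h. (h *\<^sub>R axis i 1) \<bullet> g) = (*) (g $ i)"
    by (auto simp: inner_axis')
  ultimately show ?thesis
    by (simp add: has_field_derivative_def)
qed

lemma dL_dv_weighted_lagrangian: "dL_dv (weighted_lagrangian a b f) y v s i = a s * v $ i"
  unfolding dL_dv_def weighted_lagrangian_def norm_add_scaleR_axis_power2
  by (rule DERIV_imp_deriv) (auto intro!: derivative_eq_intros)

lemma dL_dx_weighted_lagrangian:
  assumes "GDERIV f y :> g"
  shows "dL_dx (weighted_lagrangian a b f) y v s i = - b s * g $ i"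
  unfolding dL_dx_def weighted_lagrangian_def
  using gderiv_imp_has_real_derivative_axis[OF assms]
  by (intro DERIV_imp_deriv) (auto intro!: derivative_eq_intros)

lemma forced_EL_weighted_lagrangian_iff:
  fixes x x' :: "real \<Rightarrow> real^'n"
  assumes a_deriv: "(a has_real_derivative a') (at t)"
    and grad: "GDERIV f (x t) :> g"
    and x_deriv: "\<forall>\<^sub>F s in nhds t. (x has_vector_derivative x' s) (at s)"
    and x'_deriv: "(x' has_vector_derivative x'') (at t)"
  shows "forced_EL (weighted_lagrangian a b f) Fs x t
     \<longleftrightarrow> a' *\<^sub>R x' t + a t *\<^sub>R x'' + b t *\<^sub>R g = Fs t"
proof -
  have momentum_deriv: "((\<lambda>s. dL_dv (weighted_lagrangian a b f) (x s) (vector_derivative x (at s)) s i)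
      has_real_derivative a' * x' t $ i + a t * x'' $ i) (at t)" for i
  proof -
    have "\<forall>\<^sub>F s in nhds t.
        dL_dv (weighted_lagrangian a b f) (x s) (vector_derivative x (at s)) s i = a s * x' s $ i"
      using x_deriv by eventually_elim (simp add: dL_dv_weighted_lagrangian vector_derivative_at)
    moreover have "((\<lambda>s. a s * x' s $ i) has_real_derivative a' * x' t $ i + a t * x'' $ i) (at t)"
      using a_deriv has_real_derivative_vec_nth[OF x'_deriv]
      by (auto intro!: derivative_eq_intros)
    ultimately show ?thesis
      by (subst DERIV_cong_ev[OF refl _ refl]) auto
  qed
  then have momentum_deriv_iff:
    "((\<lambda>s. dL_dv (weighted_lagrangian a b f) (x s) (vector_derivative x (at s)) s i)
      has_real_derivative E) (at t) \<longleftrightarrow> a' * x' t $ i + a t * x'' $ i = E" for i E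
    using DERIV_unique by blast
  have "forced_EL (weighted_lagrangian a b f) Fs x t
      \<longleftrightarrow> (\<forall>i. a' * x' t $ i + a t * x'' $ i = - b t * g $ i + Fs t $ i)"
    by (simp add: forced_EL_def dL_dx_weighted_lagrangian[OF grad] momentum_deriv_iff)
  also have "\<dots> \<longleftrightarrow> a' *\<^sub>R x' t + a t *\<^sub>R x'' + b t *\<^sub>R g = Fs t"
    by (auto simp: vec_eq_iff algebra_simps)
  finally show ?thesis .
qed

lemma exp_integral_has_real_derivative:
  fixes \<nu> :: "real \<Rightarrow> real"
  assumes "continuous_on {0..} \<nu>" and "t > 0"
  shows "((\<lambda>s. exp (integral {0..s} \<nu>)) has_real_derivative exp (integral {0..t} \<nu>) * \<nu> t) (at t)"
proof -
  have "((\<lambda>s. integral {0..s} \<nu>) has_real_derivative \<nu> t) (at t within {0..t+1})"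
    using assms by (intro integral_has_real_derivative) (auto intro: continuous_on_subset)
  then have "((\<lambda>s. integral {0..s} \<nu>) has_real_derivative \<nu> t) (at t)"
    using \<open>t > 0\<close> by (simp add: at_within_Icc_at)
  then show ?thesis
    by (auto intro!: derivative_eq_intros)
qed

theorem lemma7p1:
  fixes P :: "real^'n \<Rightarrow> real^'n" and f :: "real^'n \<Rightarrow> real"
    and \<nu> \<eta> :: "real \<Rightarrow> real" and \<epsilon> :: real
    and x x' x'' :: "real \<Rightarrow> real^'n"
    and a b :: "real \<Rightarrow> real"
  assumes cont_nu: "continuous_on {0..} \<nu>"
    and cont_eta: "continuous_on {0..} \<eta>"
    and grad: "\<And>y. GDERIV f y :> P y"
    and a_def: "\<And>t. a t = exp (integral {0..t} \<nu>)"
    and b_def: "\<And>t. b t = a t * \<eta> t"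
    and x_deriv: "\<And>t. t > 0 \<Longrightarrow> (x has_vector_derivative x' t) (at t)"
    and x'_deriv: "\<And>t. t > 0 \<Longrightarrow> (x' has_vector_derivative x'' t) (at t)"
    and t_pos: "t > 0"
  shows "x'' t + \<nu> t *\<^sub>R x' t + \<eta> t *\<^sub>R P (x t)
           = \<epsilon> *\<^sub>R vector_derivative (\<lambda>s. \<eta> s *\<^sub>R P (x s)) (at t)
         \<longleftrightarrow>
         forced_EL (\<lambda>y v s. a s * ((1/2) * (norm v)\<^sup>2) - b s * f y)
           (\<lambda>s. (\<epsilon> * a s) *\<^sub>R vector_derivative (\<lambda>r. (b r / a r) *\<^sub>R P (x r)) (at s))
           x t"
proof -
  have a_nonzero: "a s \<noteq> 0" for s
    using a_def by simp
  have a_deriv: "(a has_real_derivative a t * \<nu> t) (at t)"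
    using exp_integral_has_real_derivative[OF cont_nu t_pos] a_def by presburger
  have force_coeff: "(\<lambda>r. (b r / a r) *\<^sub>R P (x r)) = (\<lambda>r. \<eta> r *\<^sub>R P (x r))"
    by (simp add: b_def a_nonzero)
  have "\<forall>\<^sub>F s in nhds t. (x has_vector_derivative x' s) (at s)"
    using eventually_nhds_in_open[of "{0<..}" t] t_pos
    by (auto elim!: eventually_mono intro: x_deriv)
  then have "forced_EL (weighted_lagrangian a b f)
        (\<lambda>s. (\<epsilon> * a s) *\<^sub>R vector_derivative (\<lambda>r. (b r / a r) *\<^sub>R P (x r)) (at s)) x t
      \<longleftrightarrow> (a t * \<nu> t) *\<^sub>R x' t + a t *\<^sub>R x'' t + b t *\<^sub>R P (x t)
        = (\<epsilon> * a t) *\<^sub>R vector_derivative (\<lambda>s. \<eta> s *\<^sub>R P (x s)) (at t)"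
    unfolding force_coeff by (rule forced_EL_weighted_lagrangian_iff[OF a_deriv grad _ x'_deriv[OF t_pos]])
  also have "\<dots> \<longleftrightarrow> a t *\<^sub>R (x'' t + \<nu> t *\<^sub>R x' t + \<eta> t *\<^sub>R P (x t))
        = a t *\<^sub>R (\<epsilon> *\<^sub>R vector_derivative (\<lambda>s. \<eta> s *\<^sub>R P (x s)) (at t))"
    by (simp add: b_def algebra_simps)
  also have "\<dots> \<longleftrightarrow> x'' t + \<nu> t *\<^sub>R x' t + \<eta> t *\<^sub>R P (x t)
        = \<epsilon> *\<^sub>R vector_derivative (\<lambda>s. \<eta> s *\<^sub>R P (x s)) (at t)"
    using a_nonzero[of t] by (simp only: scaleR_cancel_left) simp
  finally show ?thesis
    unfolding weighted_lagrangian_def by simp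
qed

end
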